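(* For all $M,N\in\Lambda^{001}$, if $M\longrightarrow_\beta^\infty N$ then $\mathcal T(M)\mathrel{\widetilde{\longrightarrow}_r^*}\mathcal T(N)$; that is, there are an index set $I$, resource terms $s_i$ and finite sums $T_i$ ($i\in I$) such that $\mathcal T(M)=\{s_i : i\in I\}$, $\mathcal T(N)=\bigcup_{i\in I}T_i$ and $s_i\longrightarrow_r^* T_i$ for each $i\in I$.
   Context: Fix a set $\mathcal V$ of variables. A 001-infinitary λ-term is a possibly infinite tree built from variables $x\in\mathcal V$, abstractions $\lambda x.M$ and applications $(M)N$ ($N$ the argument), such that every infinite branch enters infinitely often the argument position of an application node; $\Lambda^{001}$ is the set of such terms, up to α-equivalence, with fresh variables always available. $M[N/x]$ is capture-avoiding substitution. One-step β-reduction $\longrightarrow_\beta$ is the contextual closure (finite derivations) of $(\lambda x.M)N\longrightarrow_\beta M[N/x]$; $\longrightarrow_\beta^*$ its reflexive-transitive closure. The infinitary reduction $\longrightarrow_\beta^\infty$ is defined by the rules below, with possibly infinite derivations in which every infinite branch passes infinitely often through the third premise of (@): (var) $M\longrightarrow_\beta^* x\Rightarrow M\longrightarrow_\beta^\infty x$; (λ) $M\longrightarrow_\beta^*\lambda x.P$, $P\longrightarrow_\beta^\infty P'$ $\Rightarrow M\longrightarrow_\beta^\infty\lambda x.P'$; (@) $M\longrightarrow_\beta^*(P)Q$, $P\longrightarrow_\beta^\infty P'$, $Q\longrightarrow_\beta^\infty Q'$ $\Rightarrow M\longrightarrow_\beta^\infty(P')Q'$. Resource terms: $s::=x\mid\lambda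 x.s\mid\langle s\rangle\bar t$, $\bar t=[t_1,\dots,t_n]$ a finite multiset of resource terms. Finite sums are finite sets of resource terms written additively ($0$ empty), constructors extended by linearity. Resource substitution $s\langle\bar t/x\rangle$ is the sum over $\sigma\in\mathfrak S_n$ of the terms obtained by substituting $t_{\sigma(i)}$ for the $i$-th free occurrence of $x$ in $s$ if $x$ has exactly $n$ free occurrences, and $0$ otherwise. Simple resource reduction $\longmapsto_r$ is the least relation from terms (resp. monomials) to finite sums containing $\langle\lambda x.s\rangle\bar t\longmapsto_r s\langle\bar t/x\rangle$ and closed under abstraction, function and argument positions of applications, and elements of monomials. On finite sums, $\sum_{i=0}^n s_i\longrightarrow_r\sum_{i=0}^n T_i$ when $s_0\longmapsto_r T_0$ and for $1\le i\le n$ either $s_i\longmapsto_r T_i$ or $T_i=s_i$; $\longrightarrow_r^*$ is the reflexive-transitive closure (a single term is identified with the one-element sum). For sets $\mathcal S,\mathcal S'$ of resource terms, $\mathcal S\mathrel{\widetilde{\longrightarrow}_r^*}\mathcal S'$ is as spelled out in the claim. Taylor approximation $\ltimes$ is inductive: $x\ltimes x$; $s\ltimes M\Rightarrow\lambda x.s\ltimes\lambda x.M$; ($s\ltimes M$ and $t_i\ltimes N$ for all $i$) $\Rightarrow\langle s\rangle[t_1,\dots,t_n]\ltimes(M)N$. $\mathcal T(M)=\{s : s\ltimes M\}$. *)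

theory Defs
  imports Main "HOL-Library.Multiset" "HOL-Library.Infinite_Set"
begin

section \<open>Infinitary lambda-terms (de Bruijn indices, so alpha-equivalence is syntactic identity)\<close>

codatatype lterm = Var nat | Lam lterm | App lterm lterm

datatype dir = Body | Fun | Arg

fun subterm_at :: "lterm \<Rightarrow> dir list \<Rightarrow> lterm option" where
  "subterm_at M [] = Some M"
| "subterm_at M (d # p) =
     (case (M, d) of
        (Lam P, Body) \<Rightarrow> subterm_at P p
      | (App P Q, Fun) \<Rightarrow> subterm_at P p
      | (App P Q, Arg) \<Rightarrow> subterm_at Q p
      | _ \<Rightarrow> None)"

definition is_branch :: "lterm \<Rightarrow> (nat \<Rightarrow> dir) \<Rightarrow> bool" where
  "is_branch M f \<longleftrightarrow> (\<forall>n. subterm_at M (map f [0..<n]) \<noteq> None)"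

definition is001 :: "lterm \<Rightarrow> bool" where
  "is001 M \<longleftrightarrow> (\<forall>f. is_branch M f \<longrightarrow> (\<exists>\<^sub>\<infinity>n. f n = Arg))"

primcorec lshift :: "nat \<Rightarrow> nat \<Rightarrow> lterm \<Rightarrow> lterm" where
  "lshift d c M = (case M of
      Var i \<Rightarrow> Var (if i < c then i else i + d)
    | Lam P \<Rightarrow> Lam (lshift d (Suc c) P)
    | App P Q \<Rightarrow> App (lshift d c P) (lshift d c Q))"

primcorec lsubst_at :: "nat \<Rightarrow> lterm \<Rightarrow> lterm \<Rightarrow> lterm" where
  "lsubst_at k N M = (case M of
      Var i \<Rightarrow> (if i < k then Var i else if i = k then
                  (case N of
                     Var j \<Rightarrow> Var (j + k)
                   | Lam P \<Rightarrow> Lam (lshift k 1 P)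
                   | App P Q \<Rightarrow> App (lshift k 0 P) (lshift k 0 Q))
                else Var (i - 1))
    | Lam P \<Rightarrow> Lam (lsubst_at (Suc k) N P)
    | App P Q \<Rightarrow> App (lsubst_at k N P) (lsubst_at k N Q))"

text \<open>M[N/x] where x is the variable bound by the redex abstraction (index 0).\<close>
definition lsubst :: "lterm \<Rightarrow> lterm \<Rightarrow> lterm" where
  "lsubst M N = lsubst_at 0 N M"

inductive beta :: "lterm \<Rightarrow> lterm \<Rightarrow> bool" where
  beta_redex: "beta (App (Lam M) N) (lsubst M N)"
| beta_lam: "beta M M' \<Longrightarrow> beta (Lam M) (Lam M')"
| beta_appL: "beta M M' \<Longrightarrow> beta (App M N) (App M' N)"
| beta_appR: "beta N N' \<Longrightarrow> beta (App M N) (App M N')"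

abbreviation betas :: "lterm \<Rightarrow> lterm \<Rightarrow> bool" where
  "betas \<equiv> beta\<^sup>*\<^sup>*"

text \<open>Infinitary reduction: rules (var), (lambda), (@) read inductively, except for the third premise
  of (@), which is read coinductively (every infinite derivation branch passes infinitely often
  through that premise).\<close>
inductive ired_step :: "(lterm \<Rightarrow> lterm \<Rightarrow> bool) \<Rightarrow> lterm \<Rightarrow> lterm \<Rightarrow> bool" for R where
  ired_var: "betas M (Var x) \<Longrightarrow> ired_step R M (Var x)"
| ired_lam: "betas M (Lam P) \<Longrightarrow> ired_step R P P' \<Longrightarrow> ired_step R M (Lam P')"
| ired_app: "betas M (App P Q) \<Longrightarrow> ired_step R P P' \<Longrightarrow> R Q Q' \<Longrightarrow> ired_step R M (App P' Q')"

lemma ired_step_mono: "R \<le> S \<Longrightarrow> ired_step R \<le> ired_step S"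
proof (intro le_funI le_boolI)
  fix M N assume RS: "R \<le> S" and h: "ired_step R M N"
  from h show "ired_step S M N"
    by (induction rule: ired_step.induct) (use RS in \<open>auto intro: ired_step.intros\<close>)
qed

coinductive ired :: "lterm \<Rightarrow> lterm \<Rightarrow> bool" where
  "ired_step ired M N \<Longrightarrow> ired M N"
monos ired_step_mono

datatype rterm = RVar nat | RLam rterm | RApp rterm "rterm multiset"

primrec rshift :: "nat \<Rightarrow> nat \<Rightarrow> rterm \<Rightarrow> rterm" where
  "rshift d c (RVar i) = RVar (if i < c then i else i + d)"
| "rshift d c (RLam s) = RLam (rshift d (Suc c) s)"
| "rshift d c (RApp s ts) = RApp (rshift d c s) (image_mset (rshift d c) ts)"

text \<open>rfill k s ts u: u is obtained from s by substituting, bijectively, the elements of the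
  multiset ts for the free occurrences of the variable with index k (under k binders);
  there is no such u unless the number of occurrences equals the size of ts.\<close>
inductive rfill :: "nat \<Rightarrow> rterm \<Rightarrow> rterm multiset \<Rightarrow> rterm \<Rightarrow> bool" where
  rfill_hit: "rfill k (RVar k) {#t#} (rshift k 0 t)"
| rfill_var: "i \<noteq> k \<Longrightarrow> rfill k (RVar i) {#} (RVar (if i < k then i else i - 1))"
| rfill_lam: "rfill (Suc k) s T u \<Longrightarrow> rfill k (RLam s) T (RLam u)"
| rfill_app: "rfill k s T0 s' \<Longrightarrow> (\<forall>x. x \<in># P \<longrightarrow> rfill k (fst x) (fst (snd x)) (snd (snd x)))
    \<Longrightarrow> rfill k (RApp s (image_mset fst P)) (T0 + sum_mset (image_mset (fst \<circ> snd) P))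
                (RApp s' (image_mset (snd \<circ> snd) P))"

text \<open>Resource substitution s<ts/x> (x = index 0), as a finite sum = finite set.\<close>
definition rsubst :: "rterm \<Rightarrow> rterm multiset \<Rightarrow> rterm set" where
  "rsubst s ts = {u. rfill 0 s ts u}"

inductive rstep :: "rterm \<Rightarrow> rterm set \<Rightarrow> bool"
  and mrstep :: "rterm multiset \<Rightarrow> rterm multiset set \<Rightarrow> bool" where
  rstep_redex: "rstep (RApp (RLam s) ts) (rsubst s ts)"
| rstep_lam: "rstep s S \<Longrightarrow> rstep (RLam s) (RLam ` S)"
| rstep_fun: "rstep s S \<Longrightarrow> rstep (RApp s ts) ((\<lambda>s'. RApp s' ts) ` S)"
| rstep_arg: "mrstep ts TS \<Longrightarrow> rstep (RApp s ts) (RApp s ` TS)"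
| mrstep_elem: "rstep t T \<Longrightarrow> mrstep (add_mset t ts) ((\<lambda>t'. add_mset t' ts) ` T)"

definition rsum_step :: "rterm set \<Rightarrow> rterm set \<Rightarrow> bool" where
  "rsum_step S S' \<longleftrightarrow> (\<exists>(n::nat) (s::nat \<Rightarrow> rterm) (T::nat \<Rightarrow> rterm set).
      S = s ` {..n} \<and> S' = (\<Union>i\<le>n. T i) \<and> rstep (s 0) (T 0) \<and>
      (\<forall>i\<in>{1..n}. rstep (s i) (T i) \<or> T i = {s i}))"

abbreviation rsum_steps :: "rterm set \<Rightarrow> rterm set \<Rightarrow> bool" where
  "rsum_steps \<equiv> rsum_step\<^sup>*\<^sup>*"

inductive taylor :: "rterm \<Rightarrow> lterm \<Rightarrow> bool" where
  "taylor (RVar x) (Var x)"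
| "taylor s M \<Longrightarrow> taylor (RLam s) (Lam M)"
| "taylor s M \<Longrightarrow> (\<forall>t. t \<in># ts \<longrightarrow> taylor t N) \<Longrightarrow> taylor (RApp s ts) (App M N)"

definition Taylor :: "lterm \<Rightarrow> rterm set" where
  "Taylor M = {s. taylor s M}"

end

theory Submission
  imports Defs
begin

text \<open>A single \<beta>-step lifts to the Taylor expansion: Taylor expansion commutes with substitution,
  and resource reduction is linear in the bag argument, so every approximant of the redex reduces
  to a finite sum of approximants of the reduct and every approximant of the reduct is reached this
  way. For an infinitary reduction of M to N it suffices to approximate, resource terms being
  finite: for each d some finite reduct M' of M has exactly the approximants of N of size at
  most d, and resource reduction never increases size.\<close>

section \<open>Taylor approximants, shifting and substitution\<close>

lemma lshift_simps [simp]: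
  "lshift d c (Var i) = Var (if i < c then i else i + d)"
  "lshift d c (Lam P) = Lam (lshift d (Suc c) P)"
  "lshift d c (App P Q) = App (lshift d c P) (lshift d c Q)"
  by (subst lshift.code; simp)+

lemma lsubst_at_simps [simp]:
  "lsubst_at k N (Var i) = (if i < k then Var i else if i = k then lshift k 0 N else Var (i - 1))"
  "lsubst_at k N (Lam P) = Lam (lsubst_at (Suc k) N P)"
  "lsubst_at k N (App P Q) = App (lsubst_at k N P) (lsubst_at k N Q)"
  by (subst lsubst_at.code; cases N; simp)+

lemma taylor_Var [simp]: "taylor t (Var x) \<longleftrightarrow> t = RVar x"
  and taylor_Lam [simp]: "taylor t (Lam M) \<longleftrightarrow> (\<exists>s. t = RLam s \<and> taylor s M)"
  and taylor_App [simp]: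
    "taylor t (App M N) \<longleftrightarrow> (\<exists>s ts. t = RApp s ts \<and> taylor s M \<and> (\<forall>u. u \<in># ts \<longrightarrow> taylor u N))"
  and taylor_RVar [simp]: "taylor (RVar x) M \<longleftrightarrow> M = Var x"
  and taylor_RLam [simp]: "taylor (RLam s) M \<longleftrightarrow> (\<exists>P. M = Lam P \<and> taylor s P)"
  and taylor_RApp [simp]:
    "taylor (RApp s ts) M \<longleftrightarrow> (\<exists>P Q. M = App P Q \<and> taylor s P \<and> (\<forall>u. u \<in># ts \<longrightarrow> taylor u Q))"
  by (auto elim: taylor.cases intro: taylor.intros)

lemma mem_Taylor [simp]: "s \<in> Taylor M \<longleftrightarrow> taylor s M"
  by (simp add: Taylor_def)

lemma Taylor_Lam: "Taylor (Lam M) = RLam ` Taylor M"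
  by auto

lemma Taylor_App: "Taylor (App M N) = (\<Union>ts\<in>{ts. set_mset ts \<subseteq> Taylor N}. (\<lambda>s. RApp s ts) ` Taylor M)"
  by (fastforce simp: subset_iff image_iff)

lemma taylor_lshift_iff: "taylor u (lshift d c N) \<longleftrightarrow> (\<exists>t. u = rshift d c t \<and> taylor t N)"
proof
  show "\<exists>t. u = rshift d c t \<and> taylor t N" if "taylor u (lshift d c N)"
    using that
  proof (induction u arbitrary: N c)
    case (RVar x)
    then show ?case by (cases N) (auto split: if_splits)
  next
    case (RLam u)
    from RLam.prems obtain P where "N = Lam P" "taylor u (lshift d (Suc c) P)"
      by (cases N) auto
    then obtain t where "u = rshift d (Suc c) t" "taylor t P"
      using RLam.IH by blast
    with \<open>N = Lam P\<close> show ?case by (intro exI[of _ "RLam t"]) simp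
  next
    case (RApp u0 us)
    from RApp.prems obtain P Q where N: "N = App P Q" and u0: "taylor u0 (lshift d c P)"
      and us: "\<forall>v. v \<in># us \<longrightarrow> taylor v (lshift d c Q)"
      by (cases N) auto
    obtain t0 where t0: "u0 = rshift d c t0" "taylor t0 P"
      using RApp.IH(1)[OF u0] by blast
    have "\<forall>v\<in>#us. \<exists>t. v = rshift d c t \<and> taylor t Q"
      using RApp.IH(2) us by blast
    then obtain g where g: "\<And>v. v \<in># us \<Longrightarrow> v = rshift d c (g v) \<and> taylor (g v) Q"
      by metis
    have "us = image_mset (rshift d c) (image_mset g us)"
      using g by (metis (no_types, lifting) comp_apply image_mset_cong multiset.map_comp multiset.map_ident)
    with N t0 g show ?case
      by (intro exI[of _ "RApp t0 (image_mset g us)"]) auto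
  qed
  show "taylor u (lshift d c N)" if "\<exists>t. u = rshift d c t \<and> taylor t N"
  proof -
    have "taylor (rshift d c t) (lshift d c N)" if "taylor t N" for t c
      using that by (induction t N arbitrary: c rule: taylor.induct) auto
    with \<open>\<exists>t. u = rshift d c t \<and> taylor t N\<close> show ?thesis by blast
  qed
qed

lemma rfill_taylor:
  "rfill k s ts u \<Longrightarrow> taylor s M \<Longrightarrow> (\<forall>t. t \<in># ts \<longrightarrow> taylor t N) \<Longrightarrow> taylor u (lsubst_at k N M)"
proof (induction arbitrary: M rule: rfill.induct)
  case (rfill_hit k t)
  then show ?case by (auto simp: taylor_lshift_iff)
next
  case (rfill_app k s T0 s' P)
  then obtain M1 M2 where "M = App M1 M2" "taylor s M1" "\<forall>u. u \<in># image_mset fst P \<longrightarrow> taylor u M2"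
    by auto
  then have M: "M = App M1 M2" "taylor s M1" "\<forall>x. x \<in># P \<longrightarrow> taylor (fst x) M2"
    by auto
  have "taylor (snd (snd x)) (lsubst_at k N M2)" if "x \<in># P" for x
  proof -
    have "\<forall>t. t \<in># fst (snd x) \<longrightarrow> taylor t N"
      using rfill_app.prems(2) that by auto
    with rfill_app.IH(2) that M(3) show ?thesis by blast
  qed
  with rfill_app.IH(1) rfill_app.prems(2) M show ?case by auto
qed auto

lemma taylor_lsubst_at_Var_rfill:
  assumes "taylor u (lsubst_at k N (Var i))"
  shows "\<exists>s ts. taylor s (Var i) \<and> (\<forall>t. t \<in># ts \<longrightarrow> taylor t N) \<and> rfill k s ts u"
proof (cases "i = k")
  case True
  then obtain t where "u = rshift k 0 t" "taylor t N"
    using assms by (auto simp: taylor_lshift_iff)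
  with True show ?thesis
    by (intro exI[of _ "RVar k"] exI[of _ "{#t#}"]) (auto intro: rfill_hit)
next
  case False
  then have "rfill k (RVar i) {#} u"
    using assms rfill_var[OF False] by (auto split: if_splits)
  then show ?thesis by (intro exI[of _ "RVar i"] exI[of _ "{#}"]) auto
qed

lemma taylor_lsubst_at_rfill:
  "taylor u (lsubst_at k N M) \<Longrightarrow> \<exists>s ts. taylor s M \<and> (\<forall>t. t \<in># ts \<longrightarrow> taylor t N) \<and> rfill k s ts u"
proof (induction u arbitrary: M k)
  case (RVar x)
  then show ?case using taylor_lsubst_at_Var_rfill by (cases M) auto
next
  case (RLam u)
  show ?case
  proof (cases M)
    case (Var i)
    with RLam.prems show ?thesis using taylor_lsubst_at_Var_rfill by blast
  next
    case (Lam P)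
    with RLam.prems obtain s ts where "taylor s P" "\<forall>t. t \<in># ts \<longrightarrow> taylor t N" "rfill (Suc k) s ts u"
      using RLam.IH[of "Suc k" P] by auto
    with Lam show ?thesis by (auto intro: rfill_lam)
  next
    case (App P Q)
    with RLam.prems show ?thesis by simp
  qed
next
  case (RApp u0 us)
  show ?case
  proof (cases M)
    case (Var i)
    with RApp.prems show ?thesis using taylor_lsubst_at_Var_rfill by blast
  next
    case (Lam P)
    with RApp.prems show ?thesis by simp
  next
    case (App P Q)
    with RApp.prems have u0: "taylor u0 (lsubst_at k N P)"
      and us: "\<forall>v. v \<in># us \<longrightarrow> taylor v (lsubst_at k N Q)" by auto
    obtain s0 T0 where s0: "taylor s0 P" "\<forall>t. t \<in># T0 \<longrightarrow> taylor t N" "rfill k s0 T0 u0"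
      using RApp.IH(1)[OF u0] by blast
    have "\<forall>v\<in>#us. \<exists>p. taylor (fst p) Q \<and> (\<forall>t. t \<in># snd p \<longrightarrow> taylor t N) \<and> rfill k (fst p) (snd p) v"
      using RApp.IH(2) us by fastforce
    then obtain g where g: "\<And>v. v \<in># us \<Longrightarrow>
        taylor (fst (g v)) Q \<and> (\<forall>t. t \<in># snd (g v) \<longrightarrow> taylor t N) \<and> rfill k (fst (g v)) (snd (g v)) v"
      by metis
    define R where "R = image_mset (\<lambda>v. (fst (g v), snd (g v), v)) us"
    have "image_mset (snd \<circ> snd) R = us"
      by (simp add: R_def multiset.map_comp comp_def)
    moreover have "rfill k (RApp s0 (image_mset fst R)) (T0 + \<Sum>\<^sub># (image_mset (fst \<circ> snd) R))
        (RApp u0 (image_mset (snd \<circ> snd) R))"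
      by (rule rfill_app[OF s0(3)]) (auto simp: R_def g)
    moreover have "taylor (RApp s0 (image_mset fst R)) M"
      using App s0 g by (auto simp: R_def)
    moreover have "\<forall>t. t \<in># T0 + \<Sum>\<^sub># (image_mset (fst \<circ> snd) R) \<longrightarrow> taylor t N"
      using s0 g by (auto simp: R_def)
    ultimately show ?thesis by metis
  qed
qed

lemma Taylor_lsubst:
  "Taylor (lsubst M N) = (\<Union>s\<in>Taylor M. \<Union>ts\<in>{ts. set_mset ts \<subseteq> Taylor N}. rsubst s ts)"
proof
  show "Taylor (lsubst M N) \<subseteq> (\<Union>s\<in>Taylor M. \<Union>ts\<in>{ts. set_mset ts \<subseteq> Taylor N}. rsubst s ts)"
  proof
    fix u assume "u \<in> Taylor (lsubst M N)"
    then obtain s ts where "taylor s M" "\<forall>t. t \<in># ts \<longrightarrow> taylor t N" "rfill 0 s ts u"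
      using taylor_lsubst_at_rfill unfolding lsubst_def by fastforce
    then have "s \<in> Taylor M" "set_mset ts \<subseteq> Taylor N" "u \<in> rsubst s ts"
      by (auto simp: rsubst_def)
    then show "u \<in> (\<Union>s\<in>Taylor M. \<Union>ts\<in>{ts. set_mset ts \<subseteq> Taylor N}. rsubst s ts)"
      by blast
  qed
  show "(\<Union>s\<in>Taylor M. \<Union>ts\<in>{ts. set_mset ts \<subseteq> Taylor N}. rsubst s ts) \<subseteq> Taylor (lsubst M N)"
    unfolding lsubst_def rsubst_def by (auto simp: subset_iff intro: rfill_taylor)
qed

primrec rsize :: "rterm \<Rightarrow> nat" where
  "rsize (RVar i) = 1"
| "rsize (RLam s) = Suc (rsize s)"
| "rsize (RApp s ts) = Suc (rsize s + sum_mset (image_mset rsize ts))"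

lemma rsize_pos: "rsize t \<ge> 1"
  by (cases t) auto

lemma rsize_mem_le: "u \<in># ts \<Longrightarrow> rsize u \<le> sum_mset (image_mset rsize ts)"
  by (metis le_add1 multi_member_split sum_mset.insert)

lemma rsize_rshift [simp]: "rsize (rshift d c t) = rsize t"
proof (induction t arbitrary: c)
  case (RApp s ts)
  then show ?case by (simp add: multiset.map_comp comp_def cong: image_mset_cong)
qed auto

lemma rfill_rsize: "rfill k s ts u \<Longrightarrow> rsize u \<le> rsize s + sum_mset (image_mset rsize ts)"
proof (induction rule: rfill.induct)
  case (rfill_app k s T0 s' P)
  have sum_sum: "sum_mset (image_mset rsize (sum_mset (image_mset g P)))
      = sum_mset (image_mset (\<lambda>x. sum_mset (image_mset rsize (g x))) P)" for g :: "_ \<Rightarrow> rterm multiset"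
    by (induction P) auto
  have "sum_mset (image_mset rsize (image_mset (snd \<circ> snd) P))
     \<le> sum_mset (image_mset (\<lambda>x. rsize (fst x) + sum_mset (image_mset rsize (fst (snd x)))) P)"
    unfolding multiset.map_comp using rfill_app.IH(2) by (intro sum_mset_mono) auto
  also have "\<dots> = sum_mset (image_mset rsize (image_mset fst P))
      + sum_mset (image_mset rsize (\<Sum>\<^sub># (image_mset (fst \<circ> snd) P)))"
    by (simp add: sum_sum multiset.map_comp comp_def sum_mset.distrib)
  finally show ?case using rfill_app.IH(1) by simp
qed auto

lemma rstep_rsize:
  "(rstep s S \<longrightarrow> (\<forall>t\<in>S. rsize t \<le> rsize s))
   \<and> (mrstep ts TS \<longrightarrow> (\<forall>us\<in>TS. sum_mset (image_mset rsize us) \<le> sum_mset (image_mset rsize ts)))"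
proof (induction rule: rstep_mrstep.induct)
  case (rstep_redex s ts)
  then show ?case by (auto simp: rsubst_def dest: rfill_rsize)
qed force+

lemma rsum_steps_rsize: "rsum_steps S S' \<Longrightarrow> t \<in> S' \<Longrightarrow> \<exists>s\<in>S. rsize t \<le> rsize s"
proof (induction arbitrary: t rule: rtranclp_induct)
  case (step S' S'')
  then obtain n :: nat and s T where st: "S' = s ` {..n}" "S'' = (\<Union>i\<le>n. T i)" "rstep (s 0) (T 0)"
      "\<forall>i\<in>{1..n}. rstep (s i) (T i) \<or> T i = {s i}"
    unfolding rsum_step_def by blast
  with step.prems obtain i where i: "i \<le> n" "t \<in> T i" by blast
  have "rstep (s i) (T i) \<or> T i = {s i}"
    using st(3,4) i(1) by (cases "i = 0") auto
  then have "rsize t \<le> rsize (s i)"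
    using i(2) rstep_rsize by auto
  moreover have "s i \<in> S'" using st i by auto
  ultimately show ?case using step.IH by (meson le_trans)
qed auto

lemma finite_submultisets: "finite {T. T \<subseteq># (M::'a multiset)}"
proof (rule finite_subset)
  show "{T. T \<subseteq># M} \<subseteq> (\<Union>n\<le>size M. multisets_of_size (set_mset M) n)"
    by (auto simp: multisets_of_size_def dest: set_mset_mono size_mset_mono)
qed auto

inductive_cases rfill_RVarE: "rfill k (RVar i) ts u"
inductive_cases rfill_RLamE: "rfill k (RLam s) ts u"
inductive_cases rfill_RAppE: "rfill k (RApp s ss) ts u"

lemma finite_rfill: "finite {u. rfill k s ts u}"
proof (induction s arbitrary: k ts)
  case (RVar i)
  have "{u. rfill k (RVar i) ts u} \<subseteq> insert (RVar (if i < k then i else i - 1)) (rshift k 0 ` set_mset ts)"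
    by (auto elim: rfill_RVarE)
  then show ?case by (rule finite_subset) auto
next
  case (RLam s)
  have "{u. rfill k (RLam s) ts u} \<subseteq> RLam ` {u. rfill (Suc k) s ts u}"
    by (auto elim: rfill_RLamE)
  then show ?case by (rule finite_subset) (use RLam.IH in auto)
next
  case (RApp s ss)
  define A where "A = (\<Union>T\<in>{T. T \<subseteq># ts}. {u. rfill k s T u})"
  define B where "B = (\<Union>x\<in>set_mset ss. \<Union>T\<in>{T. T \<subseteq># ts}. {u. rfill k x T u})"
  have "{u. rfill k (RApp s ss) ts u} \<subseteq> (\<lambda>(a, b). RApp a b) ` (A \<times> multisets_of_size B (size ss))"
  proof
    fix u assume "u \<in> {u. rfill k (RApp s ss) ts u}"
    then obtain T0 s' P where h: "ss = image_mset fst P" "ts = T0 + \<Sum>\<^sub># (image_mset (fst \<circ> snd) P)"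
       "u = RApp s' (image_mset (snd \<circ> snd) P)" "rfill k s T0 s'"
       "\<forall>x. x \<in># P \<longrightarrow> rfill k (fst x) (fst (snd x)) (snd (snd x))"
      by (auto elim!: rfill_RAppE)
    have "T0 \<subseteq># ts" using h(2) by simp
    with h(4) have "s' \<in> A" unfolding A_def by blast
    moreover have "snd (snd x) \<in> B" if x: "x \<in># P" for x
    proof -
      obtain P' where "P = add_mset x P'"
        using multi_member_split[OF x] by blast
      then have "fst (snd x) \<subseteq># ts"
        using h(2) by (simp add: subset_mset.le_iff_add add.assoc add.left_commute)
      then show ?thesis unfolding B_def using x h(1,5) by force
    qed
    ultimately show "u \<in> (\<lambda>(a, b). RApp a b) ` (A \<times> multisets_of_size B (size ss))"
      using h(1,3) by (force simp: multisets_of_size_def)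
  qed
  moreover have "finite A" "finite B"
    unfolding A_def B_def using finite_submultisets RApp.IH by blast+
  then have "finite ((\<lambda>(a, b). RApp a b) ` (A \<times> multisets_of_size B (size ss)))"
    by auto
  ultimately show ?case by (rule finite_subset)
qed

lemma finite_rsubst: "finite (rsubst s ts)"
  unfolding rsubst_def by (rule finite_rfill)

lemma rsum_stepI:
  assumes "rstep s0 T0" and "\<forall>(x, X)\<in>set xs. rstep x X \<or> X = {x}"
  shows "rsum_step (insert s0 (fst ` set xs)) (T0 \<union> \<Union>(snd ` set xs))"
proof -
  define ys where "ys = (s0, T0) # xs"
  have ys: "set ys = (!) ys ` {..length xs}"
    unfolding set_conv_nth by (auto simp: ys_def image_def less_Suc_eq_le)
  show ?thesis
    unfolding rsum_step_def
  proof (intro exI conjI)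
    show "insert s0 (fst ` set xs) = (fst \<circ> (!) ys) ` {..length xs}"
      by (simp only: image_comp[symmetric] ys[symmetric]) (simp add: ys_def)
    show "T0 \<union> \<Union>(snd ` set xs) = (\<Union>i\<le>length xs. (snd \<circ> (!) ys) i)"
      by (simp only: image_comp[symmetric] ys[symmetric]) (simp add: ys_def)
    show "rstep ((fst \<circ> (!) ys) 0) ((snd \<circ> (!) ys) 0)"
      using assms(1) by (simp add: ys_def)
    show "\<forall>i\<in>{1..length xs}. rstep ((fst \<circ> (!) ys) i) ((snd \<circ> (!) ys) i)
        \<or> (snd \<circ> (!) ys) i = {(fst \<circ> (!) ys) i}"
    proof
      fix i assume "i \<in> {1..length xs}"
      then have "ys ! i = xs ! (i - 1)" "xs ! (i - 1) \<in> set xs"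
        by (auto simp: ys_def nth_Cons')
      with assms(2) show "rstep ((fst \<circ> (!) ys) i) ((snd \<circ> (!) ys) i)
          \<or> (snd \<circ> (!) ys) i = {(fst \<circ> (!) ys) i}"
        by (cases "xs ! (i - 1)") auto
    qed
  qed
qed

lemma rsum_stepE:
  assumes "rsum_step S S'"
  obtains s0 T0 xs where "rstep s0 T0" "\<forall>(x, X)\<in>set xs. rstep x X \<or> X = {x}"
    "S = insert s0 (fst ` set xs)" "S' = T0 \<union> \<Union>(snd ` set xs)"
proof -
  obtain n :: nat and s T where st: "S = s ` {..n}" "S' = (\<Union>i\<le>n. T i)" "rstep (s 0) (T 0)"
      "\<forall>i\<in>{1..n}. rstep (s i) (T i) \<or> T i = {s i}"
    using assms unfolding rsum_step_def by blast
  define xs where "xs = map (\<lambda>i. (s i, T i)) [1..<Suc n]"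
  have xs: "set xs = (\<lambda>i. (s i, T i)) ` {1..n}" and n: "{..n} = insert 0 {1..n}"
    by (auto simp: xs_def)
  show ?thesis
  proof (rule that[of "s 0" "T 0" xs])
    show "\<forall>(x, X)\<in>set xs. rstep x X \<or> X = {x}"
      using st(4) by (auto simp: xs)
    show "S = insert (s 0) (fst ` set xs)" "S' = T 0 \<union> \<Union>(snd ` set xs)"
      unfolding st(1,2) xs n by (simp_all add: image_image)
  qed (rule st(3))
qed

lemma rstep_imp_rsum_steps: "rstep s T \<Longrightarrow> rsum_steps {s} T"
  using rsum_stepI[of s T "[]"] by auto

lemma rsum_step_Un_finite: "rsum_step S S' \<Longrightarrow> finite R \<Longrightarrow> rsum_step (S \<union> R) (S' \<union> R)"
proof (elim rsum_stepE)
  fix s0 T0 xs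
  assume h: "rstep s0 T0" "\<forall>(x, X)\<in>set xs. rstep x X \<or> X = {x}"
    "S = insert s0 (fst ` set xs)" "S' = T0 \<union> \<Union>(snd ` set xs)"
  assume "finite R"
  then obtain rs where R: "R = set rs" using finite_list by blast
  let ?ys = "xs @ map (\<lambda>r. (r, {r})) rs"
  have "rsum_step (insert s0 (fst ` set ?ys)) (T0 \<union> \<Union>(snd ` set ?ys))"
    by (rule rsum_stepI) (use h in auto)
  moreover have "insert s0 (fst ` set ?ys) = S \<union> R" "T0 \<union> \<Union>(snd ` set ?ys) = S' \<union> R"
    using h R by (simp_all add: image_image image_Un Un_assoc)
  ultimately show ?thesis by simp
qed

lemma rsum_steps_Un_finite: "rsum_steps S S' \<Longrightarrow> finite R \<Longrightarrow> rsum_steps (S \<union> R) (S' \<union> R)"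
  by (induction rule: rtranclp_induct) (auto intro: rtranclp.rtrancl_into_rtrancl rsum_step_Un_finite)

lemma rsum_steps_UN:
  "finite A \<Longrightarrow> (\<forall>a\<in>A. finite (U a) \<and> rsum_steps {g a} (U a)) \<Longrightarrow> rsum_steps (g ` A) (\<Union>(U ` A))"
proof (induction rule: finite_induct)
  case (insert a A)
  then have "rsum_steps ({g a} \<union> g ` A) (U a \<union> g ` A)"
    by (intro rsum_steps_Un_finite) auto
  moreover have "rsum_steps (g ` A \<union> U a) (\<Union>(U ` A) \<union> U a)"
    using insert by (intro rsum_steps_Un_finite) auto
  ultimately show ?case by (simp add: Un_commute)
qed simp

lemma rsum_steps_bind:
  assumes "rsum_steps {s} T" "finite T" "\<forall>t\<in>T. finite (U t) \<and> rsum_steps {t} (U t)"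
  shows "rsum_steps {s} (\<Union>(U ` T))"
  using assms rsum_steps_UN[of T U id] by (auto intro: rtranclp_trans)

lemma rsum_steps_bind_at:
  assumes "rsum_steps {s} T" "finite T" "t0 \<in> T"
    and "finite U0" "U0 \<subseteq> X" "rsum_steps {t0} U0"
    and "\<forall>t\<in>T. \<exists>U. finite U \<and> U \<subseteq> X \<and> rsum_steps {t} U"
  shows "\<exists>U. finite U \<and> U0 \<subseteq> U \<and> U \<subseteq> X \<and> rsum_steps {s} U"
proof -
  obtain V where V: "\<And>t. t \<in> T \<Longrightarrow> finite (V t) \<and> V t \<subseteq> X \<and> rsum_steps {t} (V t)"
    using assms(7) by metis
  define W where "W t = (if t = t0 then U0 else V t)" for t
  have "rsum_steps {s} (\<Union>(W ` T))"
    using assms(1,2,4,6) V by (intro rsum_steps_bind) (auto simp: W_def)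
  moreover have "U0 \<subseteq> \<Union>(W ` T)"
    using assms(3) by (auto simp: W_def)
  ultimately show ?thesis
    using assms(2,4,5) V by (intro exI[of _ "\<Union>(W ` T)"]) (auto simp: W_def)
qed

lemma rsum_steps_image:
  assumes f: "\<And>x X. rstep x X \<Longrightarrow> rstep (f x) (f ` X)"
  shows "rsum_steps S S' \<Longrightarrow> rsum_steps (f ` S) (f ` S')"
proof (induction rule: rtranclp_induct)
  case (step S' S'')
  from step.hyps(2) obtain s0 T0 xs where h: "rstep s0 T0" "\<forall>(x, X)\<in>set xs. rstep x X \<or> X = {x}"
    "S' = insert s0 (fst ` set xs)" "S'' = T0 \<union> \<Union>(snd ` set xs)"
    by (rule rsum_stepE)
  let ?ys = "map (\<lambda>(x, X). (f x, f ` X)) xs"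
  have "rsum_step (insert (f s0) (fst ` set ?ys)) (f ` T0 \<union> \<Union>(snd ` set ?ys))"
    by (rule rsum_stepI) (use h f in auto)
  moreover have "insert (f s0) (fst ` set ?ys) = f ` S'" "f ` T0 \<union> \<Union>(snd ` set ?ys) = f ` S''"
    using h by (simp_all add: image_image image_Un image_UN case_prod_beta)
  ultimately show ?case using step.IH by (metis rtranclp.rtrancl_into_rtrancl)
qed auto

text \<open>rapp_sum s ms [T1, ..., Tn] is the finite sum obtained by expanding the application of s
  to the bag ms \<cdot> T1 \<cdots> Tn by multilinearity.\<close>

fun rapp_sum :: "rterm \<Rightarrow> rterm multiset \<Rightarrow> rterm set list \<Rightarrow> rterm set" where
  "rapp_sum s ms [] = {RApp s ms}"
| "rapp_sum s ms (T # Ts) = (\<Union>u\<in>T. rapp_sum s (add_mset u ms) Ts)"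

lemma finite_rapp_sum: "\<forall>T\<in>set Ts. finite T \<Longrightarrow> finite (rapp_sum s ms Ts)"
  by (induction Ts arbitrary: ms) auto

lemma rapp_sum_subset_Taylor:
  "s \<in> Taylor M \<Longrightarrow> set_mset ms \<subseteq> Taylor N \<Longrightarrow> \<forall>T\<in>set Ts. T \<subseteq> Taylor N
    \<Longrightarrow> rapp_sum s ms Ts \<subseteq> Taylor (App M N)"
proof (induction Ts arbitrary: ms)
  case (Cons T Ts)
  have "rapp_sum s (add_mset u ms) Ts \<subseteq> Taylor (App M N)" if "u \<in> T" for u
    using Cons.prems that by (intro Cons.IH) auto
  then show ?case by (simp only: rapp_sum.simps UN_subset_iff) blast
qed (auto simp: subset_iff)

lemma RApp_mem_rapp_sum: "list_all2 (\<in>) us Ts \<Longrightarrow> RApp s (ms + mset us) \<in> rapp_sum s ms Ts"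
proof (induction us Ts arbitrary: ms rule: list_all2_induct)
  case (Cons u us T Ts)
  then show ?case using Cons.IH[of "add_mset u ms"] by auto
qed simp

lemma rsum_steps_rapp_sum:
  "list_all2 (\<lambda>t T. finite T \<and> rsum_steps {t} T) ts Ts
    \<Longrightarrow> rsum_steps {RApp s (ms + mset ts)} (rapp_sum s ms Ts)"
proof (induction ts Ts arbitrary: ms rule: list_all2_induct)
  case (Cons t ts T Ts)
  define f where "f t' = RApp s (add_mset t' (ms + mset ts))" for t'
  have "rstep (f x) (f ` X)" if "rstep x X" for x X
    using rstep_arg[OF mrstep_elem[OF that], of s] by (simp add: f_def image_image)
  then have "rsum_steps (f ` {t}) (f ` T)"
    using Cons.hyps(1) by (intro rsum_steps_image) auto
  moreover have "rsum_steps (f ` T) (\<Union>u\<in>T. rapp_sum s (add_mset u ms) Ts)"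
  proof (rule rsum_steps_UN)
    show "\<forall>u\<in>T. finite (rapp_sum s (add_mset u ms) Ts) \<and> rsum_steps {f u} (rapp_sum s (add_mset u ms) Ts)"
    proof
      fix u assume "u \<in> T"
      have "\<forall>T'\<in>set Ts. finite T'"
        using Cons.hyps(2) by (auto simp: list_all2_conv_all_nth in_set_conv_nth)
      then show "finite (rapp_sum s (add_mset u ms) Ts) \<and> rsum_steps {f u} (rapp_sum s (add_mset u ms) Ts)"
        using Cons.IH[of "add_mset u ms"] by (simp add: f_def finite_rapp_sum)
    qed
  qed (use Cons.hyps(1) in simp)
  ultimately show ?case by (simp add: f_def rtranclp_trans)
qed simp

section \<open>Simulation of finite \<beta>-reduction\<close>

definition taylor_fwd :: "lterm \<Rightarrow> lterm \<Rightarrow> bool" where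
  "taylor_fwd M N \<longleftrightarrow> (\<forall>s\<in>Taylor M. \<exists>T. finite T \<and> T \<subseteq> Taylor N \<and> rsum_steps {s} T)"

definition taylor_bwd :: "lterm \<Rightarrow> lterm \<Rightarrow> bool" where
  "taylor_bwd M N \<longleftrightarrow>
     (\<forall>u\<in>Taylor N. \<exists>s\<in>Taylor M. \<exists>T. finite T \<and> u \<in> T \<and> T \<subseteq> Taylor N \<and> rsum_steps {s} T)"

definition taylor_sim :: "lterm \<Rightarrow> lterm \<Rightarrow> bool" where
  "taylor_sim M N \<longleftrightarrow> taylor_fwd M N \<and> taylor_bwd M N"

lemma taylor_sim_refl: "taylor_sim M M"
proof -
  have "finite {s} \<and> s \<in> {s} \<and> {s} \<subseteq> Taylor M \<and> rsum_steps {s} {s}" if "s \<in> Taylor M" for s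
    using that by simp
  then show ?thesis
    unfolding taylor_sim_def taylor_fwd_def taylor_bwd_def by blast
qed

lemma taylor_fwd_trans:
  assumes "taylor_fwd M1 M2" "taylor_fwd M2 M3"
  shows "taylor_fwd M1 M3"
  unfolding taylor_fwd_def
proof
  fix s assume "s \<in> Taylor M1"
  then obtain T where T: "finite T" "T \<subseteq> Taylor M2" "rsum_steps {s} T"
    using assms(1) unfolding taylor_fwd_def by blast
  then have "\<forall>t\<in>T. \<exists>U. finite U \<and> U \<subseteq> Taylor M3 \<and> rsum_steps {t} U"
    using assms(2) unfolding taylor_fwd_def by blast
  then obtain V where "\<And>t. t \<in> T \<Longrightarrow> finite (V t) \<and> V t \<subseteq> Taylor M3 \<and> rsum_steps {t} (V t)"
    by metis
  with T show "\<exists>T. finite T \<and> T \<subseteq> Taylor M3 \<and> rsum_steps {s} T"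
    by (intro exI[of _ "\<Union>(V ` T)"]) (auto intro: rsum_steps_bind)
qed

lemma taylor_bwd_trans:
  assumes "taylor_bwd M1 M2" "taylor_bwd M2 M3" "taylor_fwd M2 M3"
  shows "taylor_bwd M1 M3"
  unfolding taylor_bwd_def
proof
  fix u assume "u \<in> Taylor M3"
  then obtain s1 T1 where s1: "s1 \<in> Taylor M2" "finite T1" "u \<in> T1" "T1 \<subseteq> Taylor M3" "rsum_steps {s1} T1"
    using assms(2) unfolding taylor_bwd_def by blast
  then obtain s T where s: "s \<in> Taylor M1" "finite T" "s1 \<in> T" "T \<subseteq> Taylor M2" "rsum_steps {s} T"
    using assms(1) unfolding taylor_bwd_def by blast
  have "\<forall>t\<in>T. \<exists>U. finite U \<and> U \<subseteq> Taylor M3 \<and> rsum_steps {t} U"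
    using s(4) assms(3) unfolding taylor_fwd_def by blast
  then obtain U where "finite U" "T1 \<subseteq> U" "U \<subseteq> Taylor M3" "rsum_steps {s} U"
    using rsum_steps_bind_at[OF s(5,2,3) s1(2,4,5)] by blast
  with s(1) s1(3) show "\<exists>s\<in>Taylor M1. \<exists>T. finite T \<and> u \<in> T \<and> T \<subseteq> Taylor M3 \<and> rsum_steps {s} T"
    by blast
qed

lemma taylor_sim_trans: "taylor_sim M1 M2 \<Longrightarrow> taylor_sim M2 M3 \<Longrightarrow> taylor_sim M1 M3"
  unfolding taylor_sim_def using taylor_fwd_trans taylor_bwd_trans by blast

lemma taylor_sim_context:
  assumes ctx: "\<And>f x X. f \<in> F \<Longrightarrow> rstep x X \<Longrightarrow> rstep (f x) (f ` X)"
    and Taylor_C: "\<And>K. Taylor (C K) = (\<Union>f\<in>F. f ` Taylor K)"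
    and sim: "taylor_sim M N"
  shows "taylor_sim (C M) (C N)"
  unfolding taylor_sim_def taylor_fwd_def taylor_bwd_def
proof (intro conjI ballI)
  fix s assume "s \<in> Taylor (C M)"
  then obtain f s0 where f: "f \<in> F" "s = f s0" "s0 \<in> Taylor M"
    unfolding Taylor_C by blast
  then obtain T where T: "finite T" "T \<subseteq> Taylor N" "rsum_steps {s0} T"
    using sim unfolding taylor_sim_def taylor_fwd_def by blast
  have "f ` T \<subseteq> Taylor (C N)"
    using f(1) T(2) unfolding Taylor_C by blast
  moreover have "rsum_steps {s} (f ` T)"
    using rsum_steps_image[of f, OF ctx[OF f(1)] T(3)] f(2) by simp
  ultimately show "\<exists>T. finite T \<and> T \<subseteq> Taylor (C N) \<and> rsum_steps {s} T"
    using T(1) by blast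
next
  fix u assume "u \<in> Taylor (C N)"
  then obtain f u0 where f: "f \<in> F" "u = f u0" "u0 \<in> Taylor N"
    unfolding Taylor_C by blast
  then obtain s T where T: "s \<in> Taylor M" "finite T" "u0 \<in> T" "T \<subseteq> Taylor N" "rsum_steps {s} T"
    using sim unfolding taylor_sim_def taylor_bwd_def by blast
  have "f s \<in> Taylor (C M)" "f ` T \<subseteq> Taylor (C N)"
    using f(1) T(1,4) unfolding Taylor_C by blast+
  moreover have "rsum_steps {f s} (f ` T)"
    using rsum_steps_image[of f, OF ctx[OF f(1)] T(5)] by simp
  moreover have "finite (f ` T)" "u \<in> f ` T"
    using T(2,3) f(2) by auto
  ultimately show "\<exists>s\<in>Taylor (C M). \<exists>T. finite T \<and> u \<in> T \<and> T \<subseteq> Taylor (C N) \<and> rsum_steps {s} T"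
    by blast
qed

lemma taylor_sim_Lam: "taylor_sim M N \<Longrightarrow> taylor_sim (Lam M) (Lam N)"
  by (rule taylor_sim_context[where F = "{RLam}"]) (auto intro: rstep_lam simp: Taylor_Lam)

lemma taylor_sim_AppL: "taylor_sim M M' \<Longrightarrow> taylor_sim (App M N) (App M' N)"
  by (rule taylor_sim_context[where F = "(\<lambda>ts s. RApp s ts) ` {ts. set_mset ts \<subseteq> Taylor N}"])
    (auto intro: rstep_fun simp: Taylor_App)

lemma taylor_sim_AppR:
  assumes sim: "taylor_sim N N'"
  shows "taylor_sim (App M N) (App M N')"
  unfolding taylor_sim_def taylor_fwd_def taylor_bwd_def
proof (intro conjI ballI)
  fix s assume "s \<in> Taylor (App M N)"
  then obtain s0 l where s: "s = RApp s0 (mset l)" "s0 \<in> Taylor M" "set l \<subseteq> Taylor N"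
    unfolding Taylor_App by (metis (no_types, lifting) UN_E image_iff mem_Collect_eq ex_mset set_mset_mset)
  then have "\<forall>t\<in>set l. \<exists>T. finite T \<and> T \<subseteq> Taylor N' \<and> rsum_steps {t} T"
    using sim unfolding taylor_sim_def taylor_fwd_def by blast
  then obtain V where V: "\<And>t. t \<in> set l \<Longrightarrow> finite (V t) \<and> V t \<subseteq> Taylor N' \<and> rsum_steps {t} (V t)"
    by metis
  let ?T = "rapp_sum s0 {#} (map V l)"
  have "rsum_steps {s} ?T"
    using rsum_steps_rapp_sum[of l "map V l" s0 "{#}"] V s(1) by (simp add: list_all2_conv_all_nth)
  moreover have "finite ?T"
    by (rule finite_rapp_sum) (use V in auto)
  moreover have "?T \<subseteq> Taylor (App M N')"
    by (rule rapp_sum_subset_Taylor) (use V s(2) in auto)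
  ultimately show "\<exists>T. finite T \<and> T \<subseteq> Taylor (App M N') \<and> rsum_steps {s} T"
    by blast
next
  fix u assume "u \<in> Taylor (App M N')"
  then obtain u0 l where u: "u = RApp u0 (mset l)" "u0 \<in> Taylor M" "set l \<subseteq> Taylor N'"
    unfolding Taylor_App by (metis (no_types, lifting) UN_E image_iff mem_Collect_eq ex_mset set_mset_mset)
  then have "\<forall>v\<in>set l. \<exists>p. fst p \<in> Taylor N \<and> finite (snd p) \<and> v \<in> snd p \<and> snd p \<subseteq> Taylor N'
      \<and> rsum_steps {fst p} (snd p)"
    using sim unfolding taylor_sim_def taylor_bwd_def by fastforce
  then obtain g where g: "\<And>v. v \<in> set l \<Longrightarrow> fst (g v) \<in> Taylor N \<and> finite (snd (g v)) \<and> v \<in> snd (g v)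
      \<and> snd (g v) \<subseteq> Taylor N' \<and> rsum_steps {fst (g v)} (snd (g v))"
    by metis
  let ?s = "RApp u0 (mset (map (fst \<circ> g) l))" and ?T = "rapp_sum u0 {#} (map (snd \<circ> g) l)"
  have "?s \<in> Taylor (App M N)"
    using u(2) g by auto
  moreover have "u \<in> ?T"
    using RApp_mem_rapp_sum[of l "map (snd \<circ> g) l" u0 "{#}"] g u(1) by (simp add: list_all2_conv_all_nth)
  moreover have "rsum_steps {?s} ?T"
    using rsum_steps_rapp_sum[of "map (fst \<circ> g) l" "map (snd \<circ> g) l" u0 "{#}"] g
    by (simp add: list_all2_conv_all_nth)
  moreover have "finite ?T"
    by (rule finite_rapp_sum) (use g in auto)
  moreover have "?T \<subseteq> Taylor (App M N')"
    by (rule rapp_sum_subset_Taylor) (use g u(2) in auto)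
  ultimately show "\<exists>s\<in>Taylor (App M N). \<exists>T. finite T \<and> u \<in> T \<and> T \<subseteq> Taylor (App M N') \<and> rsum_steps {s} T"
    by blast
qed

lemma taylor_sim_redex: "taylor_sim (App (Lam M) N) (lsubst M N)"
  unfolding taylor_sim_def taylor_fwd_def taylor_bwd_def
proof (intro conjI ballI)
  fix s assume "s \<in> Taylor (App (Lam M) N)"
  then obtain s0 ts where "s = RApp (RLam s0) ts" "s0 \<in> Taylor M" "set_mset ts \<subseteq> Taylor N"
    unfolding Taylor_App Taylor_Lam by blast
  then show "\<exists>T. finite T \<and> T \<subseteq> Taylor (lsubst M N) \<and> rsum_steps {s} T"
    using rstep_imp_rsum_steps[OF rstep_redex] finite_rsubst
    by (intro exI[of _ "rsubst s0 ts"]) (auto simp only: Taylor_lsubst)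
next
  fix u assume "u \<in> Taylor (lsubst M N)"
  then obtain s0 ts where "s0 \<in> Taylor M" "set_mset ts \<subseteq> Taylor N" "u \<in> rsubst s0 ts"
    unfolding Taylor_lsubst by blast
  moreover have "rsubst s0 ts \<subseteq> Taylor (lsubst M N)" if "s0 \<in> Taylor M" "set_mset ts \<subseteq> Taylor N"
    using that unfolding Taylor_lsubst by blast
  ultimately show "\<exists>s\<in>Taylor (App (Lam M) N). \<exists>T. finite T \<and> u \<in> T \<and> T \<subseteq> Taylor (lsubst M N)
      \<and> rsum_steps {s} T"
    using rstep_imp_rsum_steps[OF rstep_redex] finite_rsubst
    by (intro bexI[of _ "RApp (RLam s0) ts"] exI[of _ "rsubst s0 ts"]) (auto simp: subset_iff)
qed

lemma beta_taylor_sim: "beta M N \<Longrightarrow> taylor_sim M N"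
  by (induction rule: beta.induct)
    (auto intro: taylor_sim_redex taylor_sim_Lam taylor_sim_AppL taylor_sim_AppR)

lemma betas_taylor_sim: "betas M N \<Longrightarrow> taylor_sim M N"
  by (induction rule: rtranclp_induct) (auto intro: taylor_sim_refl taylor_sim_trans beta_taylor_sim)

section \<open>Finite approximation of infinitary reduction\<close>

definition taylor_agree :: "nat \<Rightarrow> lterm \<Rightarrow> lterm \<Rightarrow> bool" where
  "taylor_agree d M N \<longleftrightarrow> (\<forall>t. rsize t \<le> d \<longrightarrow> (taylor t M \<longleftrightarrow> taylor t N))"

lemma taylor_agree_refl: "taylor_agree d M M"
  by (simp add: taylor_agree_def)

lemma taylor_agree_0: "taylor_agree 0 M N"
  unfolding taylor_agree_def by (metis le_zero_eq not_one_le_zero rsize_pos)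

lemma taylor_agree_mono: "d \<le> e \<Longrightarrow> taylor_agree e M N \<Longrightarrow> taylor_agree d M N"
  by (simp add: taylor_agree_def)

lemma taylor_agree_Lam: "taylor_agree d P P' \<Longrightarrow> taylor_agree (Suc d) (Lam P) (Lam P')"
  unfolding taylor_agree_def by (metis Suc_le_mono rsize.simps(2) taylor_Lam)

lemma taylor_agree_App:
  assumes "taylor_agree d P P'" "taylor_agree d Q Q'"
  shows "taylor_agree (Suc d) (App P Q) (App P' Q')"
  unfolding taylor_agree_def
proof (intro allI impI)
  fix t assume t: "rsize t \<le> Suc d"
  show "taylor t (App P Q) \<longleftrightarrow> taylor t (App P' Q')"
  proof (cases t)
    case (RApp s ts)
    then have "rsize s \<le> d" "\<And>u. u \<in># ts \<Longrightarrow> rsize u \<le> d"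
      using t rsize_mem_le[of _ ts] by fastforce+
    with assms RApp show ?thesis
      unfolding taylor_agree_def by auto
  qed auto
qed

lemma betas_Lam: "betas P P' \<Longrightarrow> betas (Lam P) (Lam P')"
  by (induction rule: rtranclp_induct) (auto intro: beta_lam rtranclp.rtrancl_into_rtrancl)

lemma betas_AppL: "betas P P' \<Longrightarrow> betas (App P Q) (App P' Q)"
  by (induction rule: rtranclp_induct) (auto intro: beta_appL rtranclp.rtrancl_into_rtrancl)

lemma betas_AppR: "betas Q Q' \<Longrightarrow> betas (App P Q) (App P Q')"
  by (induction rule: rtranclp_induct) (auto intro: beta_appR rtranclp.rtrancl_into_rtrancl)

lemma ired_Var: "ired (Var x) (Var x)"
  by (intro ired.intros ired_var) simp

lemma ired_Lam: "ired P P' \<Longrightarrow> ired (Lam P) (Lam P')"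
  by (intro ired.intros ired_lam[OF rtranclp.rtrancl_refl]) (auto elim: ired.cases)

lemma ired_App: "ired P P' \<Longrightarrow> ired Q Q' \<Longrightarrow> ired (App P Q) (App P' Q')"
  by (intro ired.intros ired_app[OF rtranclp.rtrancl_refl]) (auto elim: ired.cases)

text \<open>Outer induction on d, inner induction on the inductive part of the derivation: the
  coinductive argument premise sits below an application node, so it only has to be matched up to
  size d.\<close>

lemma ired_finite_approx: "ired M N \<Longrightarrow> \<exists>M'. betas M M' \<and> taylor_agree d M' N \<and> ired M' N"
proof (induction d arbitrary: M N)
  case 0
  then show ?case using taylor_agree_0 by blast
next
  case (Suc d)
  from Suc.prems have "ired_step ired M N" by (cases rule: ired.cases)
  then show ?case
  proof (induction rule: ired_step.induct)
    case (ired_var M x)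
    then show ?case using taylor_agree_refl ired_Var by blast
  next
    case (ired_lam M P P')
    then obtain P'' where P'': "betas P P''" "taylor_agree (Suc d) P'' P'" "ired P'' P'"
      by blast
    have "betas M (Lam P'')"
      using ired_lam(1) betas_Lam[OF P''(1)] by (rule rtranclp_trans)
    moreover have "taylor_agree (Suc d) (Lam P'') (Lam P')"
      using taylor_agree_mono[OF _ P''(2), of d] by (simp add: taylor_agree_Lam)
    ultimately show ?case using ired_Lam[OF P''(3)] by blast
  next
    case (ired_app M P Q P' Q')
    then obtain P'' where P'': "betas P P''" "taylor_agree (Suc d) P'' P'" "ired P'' P'"
      by blast
    obtain Q'' where Q'': "betas Q Q''" "taylor_agree d Q'' Q'" "ired Q'' Q'"
      using Suc.IH[OF \<open>ired Q Q'\<close>] by blast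
    have "betas M (App P'' Q'')"
      using ired_app(1) betas_AppL[OF P''(1)] betas_AppR[OF Q''(1)] by (meson rtranclp_trans)
    moreover have "taylor_agree (Suc d) (App P'' Q'') (App P' Q')"
      using taylor_agree_mono[OF _ P''(2), of d] Q''(2) by (simp add: taylor_agree_App)
    ultimately show ?case using ired_App[OF P''(3) Q''(3)] by blast
  qed
qed

text \<open>Resource reduction does not increase size, so a finite reduct agreeing with N up to size
  rsize s is as good as N itself.\<close>

lemma ired_taylor_fwd:
  assumes "ired M N"
  shows "taylor_fwd M N"
  unfolding taylor_fwd_def
proof
  fix s assume s: "s \<in> Taylor M"
  obtain M' where M': "betas M M'" "taylor_agree (rsize s) M' N"
    using ired_finite_approx[OF assms] by blast
  have "taylor_fwd M M'"
    using betas_taylor_sim[OF M'(1)] by (simp add: taylor_sim_def)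
  then obtain T where T: "finite T" "T \<subseteq> Taylor M'" "rsum_steps {s} T"
    using s unfolding taylor_fwd_def by blast
  have "T \<subseteq> Taylor N"
    using T(2) M'(2) rsum_steps_rsize[OF T(3)] unfolding taylor_agree_def by auto
  with T(1,3) show "\<exists>T. finite T \<and> T \<subseteq> Taylor N \<and> rsum_steps {s} T" by blast
qed

lemma ired_taylor_bwd:
  assumes "ired M N"
  shows "taylor_bwd M N"
  unfolding taylor_bwd_def
proof
  fix u assume u: "u \<in> Taylor N"
  obtain M1 where M1: "betas M M1" "taylor_agree (rsize u) M1 N" "ired M1 N"
    using ired_finite_approx[OF assms] by blast
  have "u \<in> Taylor M1"
    using u M1(2) unfolding taylor_agree_def by simp
  moreover have "taylor_bwd M M1"
    using betas_taylor_sim[OF M1(1)] by (simp add: taylor_sim_def)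
  ultimately obtain s T where T: "s \<in> Taylor M" "finite T" "u \<in> T" "T \<subseteq> Taylor M1" "rsum_steps {s} T"
    unfolding taylor_bwd_def by blast
  have "\<forall>t\<in>T. \<exists>U. finite U \<and> U \<subseteq> Taylor N \<and> rsum_steps {t} U"
    using ired_taylor_fwd[OF M1(3)] T(4) unfolding taylor_fwd_def by blast
  then obtain U where "finite U" "{u} \<subseteq> U" "U \<subseteq> Taylor N" "rsum_steps {s} U"
    using rsum_steps_bind_at[OF T(5,2,3), of "{u}" "Taylor N"] u by auto
  with T(1) show "\<exists>s\<in>Taylor M. \<exists>T. finite T \<and> u \<in> T \<and> T \<subseteq> Taylor N \<and> rsum_steps {s} T"
    by blast
qed

lemma ired_taylor_sim: "ired M N \<Longrightarrow> taylor_sim M N"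
  by (simp add: taylor_sim_def ired_taylor_fwd ired_taylor_bwd)

lemma taylor_sim_indexed_reduction:
  assumes "taylor_sim M N"
  shows "\<exists>(I :: (rterm \<times> rterm set) set) (s :: rterm \<times> rterm set \<Rightarrow> rterm)
            (T :: rterm \<times> rterm set \<Rightarrow> rterm set).
           Taylor M = s ` I \<and> Taylor N = (\<Union>i\<in>I. T i) \<and>
           (\<forall>i\<in>I. finite (T i) \<and> rsum_steps {s i} (T i))"
proof -
  define I where "I = {(s, T). s \<in> Taylor M \<and> finite T \<and> T \<subseteq> Taylor N \<and> rsum_steps {s} T}"
  have "Taylor M \<subseteq> fst ` I"
  proof
    fix s assume s: "s \<in> Taylor M"
    then obtain T where "finite T" "T \<subseteq> Taylor N" "rsum_steps {s} T"
      using assms unfolding taylor_sim_def taylor_fwd_def by blast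
    with s have "(s, T) \<in> I" by (simp add: I_def)
    then show "s \<in> fst ` I" by (rule image_eqI[rotated]) simp
  qed
  moreover have "Taylor N \<subseteq> (\<Union>i\<in>I. snd i)"
  proof
    fix u assume "u \<in> Taylor N"
    then obtain s T where "s \<in> Taylor M" "finite T" "u \<in> T" "T \<subseteq> Taylor N" "rsum_steps {s} T"
      using assms unfolding taylor_sim_def taylor_bwd_def by blast
    then have "(s, T) \<in> I" "u \<in> snd (s, T)" by (simp_all add: I_def)
    then show "u \<in> (\<Union>i\<in>I. snd i)" by blast
  qed
  moreover have "fst ` I \<subseteq> Taylor M" "(\<Union>i\<in>I. snd i) \<subseteq> Taylor N"
    by (auto simp: I_def)
  moreover have "\<forall>i\<in>I. finite (snd i) \<and> rsum_steps {fst i} (snd i)"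
    by (auto simp: I_def)
  ultimately show ?thesis
    by (intro exI[of _ I] exI[of _ fst] exI[of _ snd]) blast
qed

theorem mainTheorem8:
  fixes M N :: lterm
  assumes "is001 M" and "is001 N" and "ired M N"
  shows "\<exists>(I :: (rterm \<times> rterm set) set) (s :: rterm \<times> rterm set \<Rightarrow> rterm)
            (T :: rterm \<times> rterm set \<Rightarrow> rterm set).
           Taylor M = s ` I \<and> Taylor N = (\<Union>i\<in>I. T i) \<and>
           (\<forall>i\<in>I. finite (T i) \<and> rsum_steps {s i} (T i))"
  using taylor_sim_indexed_reduction[OF ired_taylor_sim[OF assms(3)]] .

end
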